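(* Let $B=F_{2,3}$ be the bowtie and let $\vec B$ be an orientation of $B$ such that either (a) all four edges incident to the center are directed into the center, or all four are directed out of the center; or (b) in one triangle both edges incident to the center are directed into the center, and in the other triangle both edges incident to the center are directed out of the center. Then for all sufficiently large $n$, $D(n,\vec B)>2^{\mathrm{ex}(n,B)}$.
   Context: The bowtie $B=F_{2,3}$ consists of two triangles sharing exactly one vertex, the center. For a directed graph $\vec H$, $D(n,\vec H)$ is the maximum, over all $n$-vertex graphs $G$, of the number of orientations of $G$ containing no copy of $\vec H$; $\mathrm{ex}(n,B)$ is the Turán number of $B$ (equal to $\lfloor n^2/4\rfloor+1$ for large $n$). *)

theory Defs
  imports Main
begin

definition all_edges :: "nat \<Rightarrow> nat set set" where
  "all_edges n = {{u, v} | u v. u < n \<and> v < n \<and> u \<noteq> v}"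

definition is_orientation :: "nat set set \<Rightarrow> (nat \<times> nat) set \<Rightarrow> bool" where
  "is_orientation G R \<longleftrightarrow>
     (\<forall>(u, v) \<in> R. {u, v} \<in> G) \<and>
     (\<forall>u v. {u, v} \<in> G \<longrightarrow> ((u, v) \<in> R \<longleftrightarrow> (v, u) \<notin> R))"

definition contains_dicopy :: "(nat \<times> nat) set \<Rightarrow> nat set \<Rightarrow> (nat \<times> nat) set \<Rightarrow> bool" where
  "contains_dicopy R VH H \<longleftrightarrow>
     (\<exists>f. inj_on f VH \<and> (\<forall>(a, b) \<in> H. (f a, f b) \<in> R))"

definition contains_copy :: "nat set set \<Rightarrow> nat set \<Rightarrow> nat set set \<Rightarrow> bool" where
  "contains_copy G VF F \<longleftrightarrow>
     (\<exists>f. inj_on f VF \<and> (\<forall>e \<in> F. f ` e \<in> G))"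

definition D :: "nat \<Rightarrow> nat set \<Rightarrow> (nat \<times> nat) set \<Rightarrow> nat" where
  "D n VH H = Max ((\<lambda>G. card {R. is_orientation G R \<and> \<not> contains_dicopy R VH H})
                    ` {G. G \<subseteq> all_edges n})"

definition ex :: "nat \<Rightarrow> nat set \<Rightarrow> nat set set \<Rightarrow> nat" where
  "ex n VF F = Max (card ` {G. G \<subseteq> all_edges n \<and> \<not> contains_copy G VF F})"

text \<open>The bowtie F_{2,3}: center 0, triangles {0,1,2} and {0,3,4}.\<close>
definition bowtie_vertices :: "nat set" where
  "bowtie_vertices = {0, 1, 2, 3, 4}"

definition bowtie :: "nat set set" where
  "bowtie = {{0,1}, {0,2}, {1,2}, {0,3}, {0,4}, {3,4}}"

end

theory Submission
  imports Defs
begin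

(* Upper bound on ex(n, B): every graph on n >= 5 vertices with floor(n^2/4) + 2 edges contains a
   bowtie. If some vertex has degree at most floor(n/2), delete it and induct (the base case n = 5
   is a short count); otherwise any two adjacent vertices have a common neighbour and every
   neighbourhood has at least four vertices. Without a bowtie the edges inside a neighbourhood
   N(v) pairwise intersect, hence all pass through a hub w; then v is the hub of N(w), and a common
   neighbour x of v and w has a neighbour outside {v, w} that breaks one of the two hubs.

   Lower bound on D(n, H): take K(m, n - m) with m = ceil(n/2) and add the path 0 - 1 - 2 in the
   first part. Every triangle passes through 1, through 0 or 2, and through the second part, so a
   copy of the bowtie is centred at 1 and its triangles are {1, 0, b} and {1, 2, c}. For each of
   the admissible orientations H, two of the three orientations "source", "sink", "directed" of
   the path admit no copy of H whatever the 2^(m(n - m)) cross edges do, and the third admits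
   none for one choice of the cross edges: 2 * 2^floor(n^2/4) + 1 > 2^ex(n, B) orientations. *)

section \<open>Graphs and copies of the bowtie\<close>

definition edges_on :: "'a set \<Rightarrow> 'a set set" where
  "edges_on V = {{u, v} | u v. u \<in> V \<and> v \<in> V \<and> u \<noteq> v}"

definition nbhd :: "'a set set \<Rightarrow> 'a \<Rightarrow> 'a set" where
  "nbhd G v = {u. {u, v} \<in> G}"

lemma doubleton_in_edges_on: "{u, v} \<in> edges_on V \<longleftrightarrow> u \<in> V \<and> v \<in> V \<and> u \<noteq> v"
  unfolding edges_on_def by (auto simp: doubleton_eq_iff)

lemma edges_on_eq: "edges_on V = {e. e \<subseteq> V \<and> card e = 2}"
  unfolding edges_on_def by (auto simp: card_2_iff)

lemma finite_edges_on: "finite V \<Longrightarrow> finite (edges_on V)"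
  unfolding edges_on_eq by (rule finite_subset[of _ "Pow V"]) auto

lemma card_edges_on: "finite V \<Longrightarrow> card (edges_on V) = card V choose 2"
  unfolding edges_on_eq by (simp add: n_subsets)

lemma all_edges_eq_edges_on: "all_edges n = edges_on {..<n}"
  unfolding all_edges_def edges_on_def by auto

lemma nbhd_sym: "u \<in> nbhd G v \<longleftrightarrow> v \<in> nbhd G u"
  unfolding nbhd_def by (simp add: insert_commute)

lemma nbhd_edges_on: "G \<subseteq> edges_on V \<Longrightarrow> u \<in> nbhd G v \<Longrightarrow> u \<in> V \<and> v \<in> V \<and> u \<noteq> v"
  unfolding nbhd_def using doubleton_in_edges_on[of u v V] by blast

lemma nbhd_subset: "G \<subseteq> edges_on V \<Longrightarrow> nbhd G v \<subseteq> V - {v}"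
  using nbhd_edges_on[of G V _ v] by blast

lemma finite_nbhd: "G \<subseteq> edges_on V \<Longrightarrow> finite V \<Longrightarrow> finite (nbhd G v)"
  using nbhd_subset[of G V v] finite_subset by blast

lemma loopfree_edges_on: "G \<subseteq> edges_on V \<Longrightarrow> {x} \<notin> G"
  using doubleton_in_edges_on[of x x V] by auto

lemma card_less_ex_notin: "finite B \<Longrightarrow> card B < card A \<Longrightarrow> \<exists>x\<in>A. x \<notin> B"
  by (meson card_mono not_le subsetI)

lemma contains_copy_mono: "contains_copy G' VF F \<Longrightarrow> G' \<subseteq> G \<Longrightarrow> contains_copy G VF F"
  unfolding contains_copy_def by blast

lemma contains_bowtieI:
  assumes "distinct [c, x1, x2, y1, y2]"
    and "{c, x1} \<in> G" "{c, x2} \<in> G" "{x1, x2} \<in> G" "{c, y1} \<in> G" "{c, y2} \<in> G" "{y1, y2} \<in> G"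
  shows "contains_copy G bowtie_vertices bowtie"
proof -
  define f where "f i = [c, x1, x2, y1, y2] ! i" for i
  have "inj_on f bowtie_vertices"
    using assms(1) unfolding inj_on_def f_def bowtie_vertices_def by auto
  moreover have "\<forall>e \<in> bowtie. f ` e \<in> G"
    using assms(2-) unfolding bowtie_def f_def by (auto simp: insert_commute)
  ultimately show ?thesis unfolding contains_copy_def by blast
qed

section \<open>The Turan number of the bowtie\<close>

definition hub :: "'a set set \<Rightarrow> 'a set \<Rightarrow> 'a \<Rightarrow> bool" where
  "hub G L w \<longleftrightarrow> w \<in> L \<and> (\<forall>x\<in>L. \<forall>y\<in>L. {x, y} \<in> G \<longrightarrow> w \<in> {x, y})"

lemma hub_of_intersecting_edges:
  assumes L: "4 \<le> card L"
    and cover: "\<forall>x\<in>L. \<exists>y\<in>L. {x, y} \<in> G" and loopfree: "\<forall>x. {x} \<notin> G"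
    and meet: "\<And>a b c d. {a, b, c, d} \<subseteq> L \<Longrightarrow> {a, b} \<in> G \<Longrightarrow> {c, d} \<in> G \<Longrightarrow> {a, b} \<inter> {c, d} \<noteq> {}"
  shows "\<exists>w. hub G L w"
proof (rule ccontr)
  (* Take an edge pq. If neither p nor q is a hub, edges pr and qs avoiding q resp. p exist, and
     they must meet, so r = s; an edge at a fourth vertex t cannot meet all of pq, pr and qr. *)
  assume "\<not> ?thesis"
  hence no_hub: "\<not> (\<exists>w\<in>L. \<forall>x\<in>L. \<forall>y\<in>L. {x, y} \<in> G \<longrightarrow> w \<in> {x, y})"
    unfolding hub_def by blast
  obtain p where p: "p \<in> L" using L by fastforce
  obtain q where q: "q \<in> L" "{p, q} \<in> G" using cover p by blast
  have "p \<noteq> q" using q loopfree by auto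
  obtain x1 y1 where xy1: "x1 \<in> L" "y1 \<in> L" "{x1, y1} \<in> G" "q \<notin> {x1, y1}"
    using no_hub q by blast
  obtain x2 y2 where xy2: "x2 \<in> L" "y2 \<in> L" "{x2, y2} \<in> G" "p \<notin> {x2, y2}"
    using no_hub p by blast
  define r where "r = (if x1 = p then y1 else x1)"
  define s where "s = (if x2 = q then y2 else x2)"
  have "p \<in> {x1, y1}" using meet[of p q x1 y1] p q xy1 by auto
  hence r: "{x1, y1} = {p, r}" "r \<in> L" "r \<noteq> q" unfolding r_def using xy1 by auto
  have "q \<in> {x2, y2}" using meet[of p q x2 y2] p q xy2 by auto
  hence s: "{x2, y2} = {q, s}" "s \<in> L" "s \<noteq> p" unfolding s_def using xy2 by auto
  have "r \<noteq> p" "s \<noteq> q" using r(1) s(1) xy1(3) xy2(3) loopfree by (metis insert_absorb2)+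
  have "r = s" using meet[of p r q s] r s xy1 xy2 p q \<open>p \<noteq> q\<close> \<open>r \<noteq> p\<close> \<open>s \<noteq> q\<close> by auto
  have "card {p, q, r} \<le> 3" by (simp add: card_insert_if)
  hence "card {p, q, r} < card L" using L by linarith
  then obtain t where t: "t \<in> L" "t \<notin> {p, q, r}" using card_less_ex_notin[of "{p, q, r}" L] by auto
  obtain u where u: "u \<in> L" "{t, u} \<in> G" using cover t(1) by blast
  have "u \<in> {p, q}" using meet[of t u p q] t u p q by auto
  moreover have "u \<in> {p, r}" using meet[of t u p r] t u p r xy1 by auto
  moreover have "u \<in> {q, r}" using meet[of t u q r] t u q s xy2 \<open>r = s\<close> by auto
  ultimately show False using \<open>p \<noteq> q\<close> \<open>r \<noteq> p\<close> r(3) by auto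
qed

lemma hub_adjacent:
  assumes "hub G (nbhd G v) w" and "x \<in> nbhd G v" "x \<noteq> w"
    and "nbhd G v \<inter> nbhd G x \<noteq> {}"
  shows "{x, w} \<in> G"
proof -
  obtain y where "y \<in> nbhd G v" "{y, x} \<in> G" using assms(4) unfolding nbhd_def by blast
  moreover from this have "w \<in> {x, y}" using assms(1,2) unfolding hub_def by (simp add: insert_commute)
  ultimately show ?thesis using assms(3) by (auto simp: insert_commute)
qed

context
  fixes G :: "nat set set" and V :: "nat set"
  assumes G: "G \<subseteq> edges_on V" and free: "\<not> contains_copy G bowtie_vertices bowtie"
    and deg: "\<forall>x\<in>V. 4 \<le> card (nbhd G x)"
    and tri: "\<forall>x\<in>V. \<forall>y\<in>nbhd G x. nbhd G x \<inter> nbhd G y \<noteq> {}"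
begin

lemma nbhd_in_vertices: "x \<in> nbhd G u \<Longrightarrow> x \<in> V \<and> u \<in> V"
  using nbhd_edges_on[OF G] by blast

lemma hub_of_nbhd_exists:
  assumes v: "v \<in> V" shows "\<exists>w. hub G (nbhd G v) w"
proof (rule hub_of_intersecting_edges)
  show "4 \<le> card (nbhd G v)" using deg v by blast
  have "\<forall>y\<in>nbhd G v. nbhd G v \<inter> nbhd G y \<noteq> {}" using tri v by blast
  thus "\<forall>x\<in>nbhd G v. \<exists>y\<in>nbhd G v. {x, y} \<in> G"
    unfolding nbhd_def by (auto simp: insert_commute)
  show "\<forall>x. {x} \<notin> G" using loopfree_edges_on[OF G] by blast
  fix a b c d
  assume abcd: "{a, b, c, d} \<subseteq> nbhd G v" "{a, b} \<in> G" "{c, d} \<in> G"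
  have "a \<noteq> b" "c \<noteq> d" using abcd loopfree_edges_on[OF G] by (metis insert_absorb2)+
  moreover have "v \<notin> {a, b, c, d}" using abcd(1) nbhd_edges_on[OF G] by blast
  ultimately show "{a, b} \<inter> {c, d} \<noteq> {}"
    using free contains_bowtieI[of v a b c d G] abcd unfolding nbhd_def by (auto simp: insert_commute)
qed

lemma hub_of_nbhd_adjacent: "hub G (nbhd G u) w \<Longrightarrow> x \<in> nbhd G u \<Longrightarrow> x \<noteq> w \<Longrightarrow> {x, w} \<in> G"
  by (rule hub_adjacent) (use tri nbhd_in_vertices in blast)+

lemma nbhd_not_subset:
  assumes "u \<in> V" "finite A" "card A \<le> 3" shows "\<exists>y\<in>nbhd G u. y \<notin> A"
proof -
  have "card A < card (nbhd G u)" using deg assms by fastforce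
  thus ?thesis using card_less_ex_notin assms(2) by blast
qed

lemma hub_of_hub:
  assumes v: "v \<in> V" and w: "hub G (nbhd G v) w"
  shows "hub G (nbhd G w) v"
proof -
  have "w \<in> nbhd G v" using w unfolding hub_def by blast
  hence "v \<in> nbhd G w" "w \<in> V" using nbhd_sym[of w G v] nbhd_in_vertices[of w v] by simp_all
  have "\<exists>x\<in>nbhd G v. x \<notin> {w}" by (rule nbhd_not_subset[OF v]) simp_all
  then obtain x where x: "x \<in> nbhd G v" "x \<noteq> w" by blast
  have "\<exists>x'\<in>nbhd G v. x' \<notin> {w, x}" by (rule nbhd_not_subset[OF v]) (simp_all add: card_insert_if)
  then obtain x' where x': "x' \<in> nbhd G v" "x' \<notin> {w, x}" by blast
  have "x \<in> nbhd G w" "x' \<in> nbhd G w" using hub_of_nbhd_adjacent[OF w] x x' unfolding nbhd_def by auto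
  obtain w' where w': "hub G (nbhd G w) w'" using hub_of_nbhd_exists \<open>w \<in> V\<close> by blast
  have "{v, x} \<in> G" "{v, x'} \<in> G" using x x' unfolding nbhd_def by (auto simp: insert_commute)
  hence "w' \<in> {v, x}" "w' \<in> {v, x'}"
    using w' \<open>v \<in> nbhd G w\<close> \<open>x \<in> nbhd G w\<close> \<open>x' \<in> nbhd G w\<close> unfolding hub_def by blast+
  thus ?thesis using w' x' by auto
qed

lemma vertices_empty: "V = {}"
proof
  show "V \<subseteq> {}"
  proof
    fix v assume v: "v \<in> V"
    obtain w where w: "hub G (nbhd G v) w" using hub_of_nbhd_exists v by blast
    have hub_w: "hub G (nbhd G w) v" by (rule hub_of_hub[OF v w])
    have "w \<in> nbhd G v" using w unfolding hub_def by blast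
    have "\<exists>x\<in>nbhd G v. x \<notin> {w}" by (rule nbhd_not_subset[OF v]) simp_all
    then obtain x where x: "x \<in> nbhd G v" "x \<noteq> w" by blast
    have "x \<in> nbhd G w" using hub_of_nbhd_adjacent[OF w x] by (simp add: nbhd_def)
    have "x \<in> V" "x \<noteq> v" using nbhd_in_vertices[OF x(1)] nbhd_edges_on[OF G x(1)] by blast+
    obtain c where c: "hub G (nbhd G x) c" using hub_of_nbhd_exists \<open>x \<in> V\<close> by blast
    have "v \<in> nbhd G x" "w \<in> nbhd G x" "{v, w} \<in> G"
      using x \<open>x \<in> nbhd G w\<close> \<open>w \<in> nbhd G v\<close> unfolding nbhd_def by (auto simp: insert_commute)
    hence "c \<in> {v, w}" using c unfolding hub_def by blast
    have "\<exists>y\<in>nbhd G x. y \<notin> {v, w}" by (rule nbhd_not_subset[OF \<open>x \<in> V\<close>]) (simp_all add: card_insert_if)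
    then obtain y where y: "y \<in> nbhd G x" "y \<notin> {v, w}" by blast
    have "{y, c} \<in> G" using hub_of_nbhd_adjacent[OF c y(1)] y(2) \<open>c \<in> {v, w}\<close> by blast
    have "{x, y} \<in> G" using y(1) unfolding nbhd_def by (simp add: insert_commute)
    show "v \<in> {}"
    proof (cases "c = v")
      case True
      hence "y \<in> nbhd G v" using \<open>{y, c} \<in> G\<close> unfolding nbhd_def by simp
      thus ?thesis using w x \<open>{x, y} \<in> G\<close> y(2) unfolding hub_def by blast
    next
      case False
      hence "y \<in> nbhd G w" using \<open>{y, c} \<in> G\<close> \<open>c \<in> {v, w}\<close> unfolding nbhd_def by auto
      thus ?thesis using hub_w \<open>x \<in> nbhd G w\<close> \<open>{x, y} \<in> G\<close> \<open>x \<noteq> v\<close> y(2) unfolding hub_def by blast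
    qed
  qed
qed simp

end
lemma bowtie_if_edges_in_triangles:
  assumes "G \<subseteq> edges_on V" and "V \<noteq> {}"
    and "\<forall>x\<in>V. 4 \<le> card (nbhd G x)"
    and "\<forall>x\<in>V. \<forall>y\<in>nbhd G x. nbhd G x \<inter> nbhd G y \<noteq> {}"
  shows "contains_copy G bowtie_vertices bowtie"
  using vertices_empty[of G V] assms by blast

lemma bowtie_if_min_degree:
  assumes G: "G \<subseteq> edges_on V" and fin: "finite V" and six: "6 \<le> card V"
    and deg: "\<forall>x\<in>V. card V div 2 + 1 \<le> card (nbhd G x)"
  shows "contains_copy G bowtie_vertices bowtie"
proof (rule bowtie_if_edges_in_triangles[OF G])
  show "V \<noteq> {}" using six by auto
  have "4 \<le> card V div 2 + 1" using six by linarith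
  thus "\<forall>x\<in>V. 4 \<le> card (nbhd G x)" using deg by (meson le_trans)
  show "\<forall>x\<in>V. \<forall>y\<in>nbhd G x. nbhd G x \<inter> nbhd G y \<noteq> {}"
  proof (intro ballI notI)
    fix x y assume x: "x \<in> V" and y: "y \<in> nbhd G x" and disj: "nbhd G x \<inter> nbhd G y = {}"
    have "y \<in> V" using nbhd_edges_on[OF G y] by blast
    have "card (nbhd G x \<union> nbhd G y) \<le> card V"
      using nbhd_subset[OF G] by (intro card_mono[OF fin]) blast
    moreover have "card (nbhd G x \<union> nbhd G y) = card (nbhd G x) + card (nbhd G y)"
      using disj finite_nbhd[OF G fin] by (simp add: card_Un_disjoint)
    moreover have "card V div 2 + 1 \<le> card (nbhd G x)" "card V div 2 + 1 \<le> card (nbhd G y)"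
      using deg x \<open>y \<in> V\<close> by blast+
    ultimately show False by linarith
  qed
qed

lemma vertex_avoiding_edges:
  assumes fin: "finite V" and M: "M \<subseteq> edges_on V" "finite M" and small: "2 * card M < card V"
  shows "\<exists>c\<in>V. c \<notin> \<Union>M"
proof (rule card_less_ex_notin)
  have "card (\<Union>M) \<le> sum card M" by (rule card_Union_le_sum_card)
  also have "\<dots> = 2 * card M" using M(1) by (simp add: subset_iff edges_on_eq)
  finally show "card (\<Union>M) < card V" using small by linarith
  show "finite (\<Union>M)" using M fin by (auto simp: edges_on_eq intro: finite_subset[OF _ fin])
qed

lemma bowtie_if_5_vertices_8_edges:
  assumes fin: "finite V" and five: "card V = 5" and G: "G \<subseteq> edges_on V" and eight: "8 \<le> card G"
  shows "contains_copy G bowtie_vertices bowtie"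
proof (rule ccontr)
  assume free: "\<not> ?thesis"
  define M where "M = edges_on V - G"
  have finM: "finite M" unfolding M_def using finite_edges_on[OF fin] by simp
  have "card (edges_on V) = 10" using card_edges_on[OF fin] five by (simp add: choose_two)
  hence cardM: "card M \<le> 2"
    unfolding M_def using card_Diff_subset[OF finite_subset[OF G finite_edges_on[OF fin]] G] eight by simp
  obtain c where c: "c \<in> V" "c \<notin> \<Union>M"
    using vertex_avoiding_edges[OF fin _ finM] cardM five unfolding M_def by fastforce
  (* c is adjacent to all other vertices, so each of the three perfect matchings of the
     remaining four vertices must contain a missing edge; but at most two edges are missing. *)
  have "card (V - {c}) = Suc 3" using five c(1) fin by simp
  then obtain p B where "V - {c} = insert p B" "p \<notin> B" "card B = 3"
    unfolding card_Suc_eq by blast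
  then obtain q r s where pqrs: "V - {c} = {p, q, r, s}" "distinct [p, q, r, s]"
    unfolding card_3_iff by auto
  have edge: "{x, y} \<in> G \<or> {x, y} \<in> M" if "x \<in> V" "y \<in> V" "x \<noteq> y" for x y
    using that doubleton_in_edges_on[of x y V] unfolding M_def by blast
  have centre: "{c, x} \<in> G" if "x \<in> V - {c}" for x
    using edge[of c x] that c by blast
  have missing: "{a, b} \<in> M \<or> {a', b'} \<in> M"
    if "{a, b, a', b'} \<subseteq> V - {c}" "distinct [a, b, a', b']" for a b a' b'
  proof (rule ccontr)
    assume "\<not> ?thesis"
    hence "{a, b} \<in> G" "{a', b'} \<in> G" using edge[of a b] edge[of a' b'] that by auto
    moreover have "distinct [c, a, b, a', b']" using that by auto
    moreover have "{c, a} \<in> G" "{c, b} \<in> G" "{c, a'} \<in> G" "{c, b'} \<in> G"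
      using centre that(1) by auto
    ultimately have "contains_copy G bowtie_vertices bowtie" by (intro contains_bowtieI)
    thus False using free by blast
  qed
  obtain e1 e2 e3 where "e1 \<in> M" "e2 \<in> M" "e3 \<in> M"
    "e1 \<in> {{p, q}, {r, s}}" "e2 \<in> {{p, r}, {q, s}}" "e3 \<in> {{p, s}, {q, r}}"
    using missing[of p q r s] missing[of p r q s] missing[of p s q r] pqrs by auto
  moreover from this have "card {e1, e2, e3} = 3"
    using pqrs(2) by (auto simp: doubleton_eq_iff)
  ultimately have "3 \<le> card M" using card_mono[OF finM, of "{e1, e2, e3}"] by simp
  thus False using cardM by simp
qed

lemma card_le_card_delete_vertex:
  assumes G: "G \<subseteq> edges_on V" and fin: "finite V"
  shows "card G \<le> card {e \<in> G. v \<notin> e} + card (nbhd G v)"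
proof -
  have "{e \<in> G. v \<in> e} \<subseteq> (\<lambda>u. {u, v}) ` nbhd G v"
  proof
    fix e assume e: "e \<in> {e \<in> G. v \<in> e}"
    then obtain x y where xy: "e = {x, y}" using G unfolding edges_on_def by blast
    define u where "u = (if x = v then y else x)"
    have "e = {u, v}" using e xy unfolding u_def by auto
    thus "e \<in> (\<lambda>u. {u, v}) ` nbhd G v" using e unfolding nbhd_def by blast
  qed
  hence "card {e \<in> G. v \<in> e} \<le> card (nbhd G v)"
    using finite_nbhd[OF G fin] card_image_le surj_card_le by (meson card_mono finite_imageI le_trans)
  moreover have "card G \<le> card {e \<in> G. v \<notin> e} + card {e \<in> G. v \<in> e}"
    using card_Un_le[of "{e \<in> G. v \<notin> e}" "{e \<in> G. v \<in> e}"]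
    by (simp add: Un_def conj_disj_distribL[symmetric])
  ultimately show ?thesis by linarith
qed

lemma edges_delete_vertex:
  assumes "G \<subseteq> edges_on V" shows "{e \<in> G. v \<notin> e} \<subseteq> edges_on (V - {v})"
proof
  fix e assume e: "e \<in> {e \<in> G. v \<notin> e}"
  then obtain x y where "e = {x, y}" "x \<in> V" "y \<in> V" "x \<noteq> y" using assms unfolding edges_on_def by blast
  with e show "e \<in> edges_on (V - {v})" by (auto simp: doubleton_in_edges_on)
qed

lemma square_div_4_Suc: "Suc n * Suc n div 4 = n * n div 4 + Suc n div 2"
proof (cases "even n")
  case True
  then obtain k where "n = 2 * k" by blast
  thus ?thesis by (simp add: algebra_simps)
next
  case False
  then obtain k where "n = 2 * k + 1" using oddE by blast
  moreover have "(4 + k * 8 + k * k * 4) div 4 = 1 + 2 * k + k * k" by simp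
  ultimately show ?thesis by (simp add: algebra_simps)
qed

lemma bowtie_if_many_edges:
  assumes "5 \<le> n" and "finite V" "card V = n" "G \<subseteq> edges_on V" "n * n div 4 + 2 \<le> card G"
  shows "contains_copy G bowtie_vertices bowtie"
  using assms
proof (induction n arbitrary: V G rule: nat_induct_at_least)
  case base
  then show ?case by (intro bowtie_if_5_vertices_8_edges[of V]) simp_all
next
  case (Suc n)
  show ?case
  proof (cases "\<forall>x\<in>V. Suc n div 2 + 1 \<le> card (nbhd G x)")
    case True
    then show ?thesis using Suc.hyps Suc.prems by (intro bowtie_if_min_degree[of G V]) simp_all
  next
    case False
    then obtain v where v: "v \<in> V" "card (nbhd G v) \<le> Suc n div 2" by (auto simp: not_le)
    have "card G \<le> card {e \<in> G. v \<notin> e} + card (nbhd G v)"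
      by (rule card_le_card_delete_vertex[OF Suc.prems(3,1)])
    hence "n * n div 4 + 2 \<le> card {e \<in> G. v \<notin> e}"
      using Suc.prems(4) v(2) square_div_4_Suc[of n] by linarith
    moreover have "card (V - {v}) = n" using Suc.prems(1,2) v(1) by simp
    ultimately have "contains_copy {e \<in> G. v \<notin> e} bowtie_vertices bowtie"
      using Suc.IH Suc.prems(1) edges_delete_vertex[OF Suc.prems(3)] by blast
    thus ?thesis by (rule contains_copy_mono) blast
  qed
qed

lemma ex_bowtie_le: "5 \<le> n \<Longrightarrow> ex n bowtie_vertices bowtie \<le> n * n div 4 + 1"
  unfolding ex_def
proof (rule Max.boundedI)
  show "finite (card ` {G. G \<subseteq> all_edges n \<and> \<not> contains_copy G bowtie_vertices bowtie})"
    using finite_edges_on[of "{..<n}"] by (simp add: all_edges_eq_edges_on)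
  have "\<not> contains_copy {} bowtie_vertices bowtie" unfolding contains_copy_def bowtie_def by blast
  thus "card ` {G. G \<subseteq> all_edges n \<and> \<not> contains_copy G bowtie_vertices bowtie} \<noteq> {}" by blast
next
  fix k assume n: "5 \<le> n"
    and "k \<in> card ` {G. G \<subseteq> all_edges n \<and> \<not> contains_copy G bowtie_vertices bowtie}"
  then obtain G where G: "G \<subseteq> edges_on {..<n}" "\<not> contains_copy G bowtie_vertices bowtie" "k = card G"
    by (auto simp: all_edges_eq_edges_on)
  show "k \<le> n * n div 4 + 1"
  proof (rule ccontr)
    assume "\<not> k \<le> n * n div 4 + 1"
    hence "contains_copy G bowtie_vertices bowtie"
      using bowtie_if_many_edges[OF n _ _ G(1)] G(3) by simp
    thus False using G(2) by blast
  qed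
qed

section \<open>Orientations\<close>

lemma is_orientationI:
  assumes "\<And>u v. (u, v) \<in> R \<Longrightarrow> {u, v} \<in> G"
    and "\<And>u v. {u, v} \<in> G \<Longrightarrow> (u, v) \<in> R \<longleftrightarrow> (v, u) \<notin> R"
  shows "is_orientation G R"
  unfolding is_orientation_def using assms by (simp add: case_prod_beta)

lemma is_orientation_arc: "is_orientation G R \<Longrightarrow> (u, v) \<in> R \<Longrightarrow> {u, v} \<in> G"
  unfolding is_orientation_def by fast

lemma is_orientation_edge: "is_orientation G R \<Longrightarrow> {u, v} \<in> G \<Longrightarrow> (u, v) \<in> R \<longleftrightarrow> (v, u) \<notin> R"
  unfolding is_orientation_def by simp

lemma is_orientation_Un:
  assumes R1: "is_orientation G1 R1" and R2: "is_orientation G2 R2" and disj: "G1 \<inter> G2 = {}"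
  shows "is_orientation (G1 \<union> G2) (R1 \<union> R2)"
proof (rule is_orientationI)
  show "{u, v} \<in> G1 \<union> G2" if "(u, v) \<in> R1 \<union> R2" for u v
    using that is_orientation_arc[OF R1] is_orientation_arc[OF R2] by blast
  have not_arc: "(u, v) \<notin> R \<and> (v, u) \<notin> R" if "is_orientation G R" "{u, v} \<notin> G" for G R u v
    using is_orientation_arc[OF that(1), of u v] is_orientation_arc[OF that(1), of v u] that(2)
    by (auto simp: insert_commute)
  fix u v assume "{u, v} \<in> G1 \<union> G2"
  then consider "{u, v} \<in> G1" "{u, v} \<notin> G2" | "{u, v} \<in> G2" "{u, v} \<notin> G1" using disj by blast
  thus "(u, v) \<in> R1 \<union> R2 \<longleftrightarrow> (v, u) \<notin> R1 \<union> R2"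
  proof cases
    case 1
    thus ?thesis using is_orientation_edge[OF R1 1(1)] not_arc[OF R2 1(2)] by blast
  next
    case 2
    thus ?thesis using is_orientation_edge[OF R2 2(1)] not_arc[OF R1 2(2)] by blast
  qed
qed

lemma is_orientation_pairs:
  assumes asym: "C \<inter> C\<inverse> = {}" and S: "S \<subseteq> C"
  shows "is_orientation ((\<lambda>(x, y). {x, y}) ` C) (S \<union> (C - S)\<inverse>)"
proof (rule is_orientationI)
  show "{u, v} \<in> (\<lambda>(x, y). {x, y}) ` C" if "(u, v) \<in> S \<union> (C - S)\<inverse>" for u v
  proof -
    have "(u, v) \<in> C \<or> (v, u) \<in> C" using that S by blast
    thus ?thesis by (auto simp: insert_commute intro: image_eqI)
  qed
  fix u v assume "{u, v} \<in> (\<lambda>(x, y). {x, y}) ` C"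
  hence "(u, v) \<in> C \<or> (v, u) \<in> C" by (auto simp: doubleton_eq_iff)
  thus "(u, v) \<in> S \<union> (C - S)\<inverse> \<longleftrightarrow> (v, u) \<notin> S \<union> (C - S)\<inverse>" using asym S by blast
qed

lemma copy_of_dicopy:
  assumes R: "is_orientation G R" and H: "is_orientation F H"
    and arcs: "\<forall>(a, b) \<in> H. (f a, f b) \<in> R" and e: "{a, b} \<in> F"
  shows "{f a, f b} \<in> G"
proof (cases "(a, b) \<in> H")
  case True
  thus ?thesis using arcs is_orientation_arc[OF R] by blast
next
  case False
  hence "(f b, f a) \<in> R" using is_orientation_edge[OF H e] arcs by blast
  from is_orientation_arc[OF R this] show ?thesis by (simp add: insert_commute)
qed

lemma finite_orientations:
  assumes G: "G \<subseteq> all_edges n" shows "finite {R. is_orientation G R}"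
proof (rule finite_subset[of _ "Pow ({..<n} \<times> {..<n})"])
  have "R \<subseteq> {..<n} \<times> {..<n}" if R: "is_orientation G R" for R
  proof (rule subrelI)
    fix u v assume "(u, v) \<in> R"
    hence "{u, v} \<in> all_edges n" using is_orientation_arc[OF R] G by blast
    thus "(u, v) \<in> {..<n} \<times> {..<n}" unfolding all_edges_eq_edges_on doubleton_in_edges_on by simp
  qed
  thus "{R. is_orientation G R} \<subseteq> Pow ({..<n} \<times> {..<n})" by blast
qed simp

lemma card_free_orientations_le_D:
  assumes "G \<subseteq> all_edges n"
  shows "card {R. is_orientation G R \<and> \<not> contains_dicopy R VH H} \<le> D n VH H"
  unfolding D_def
proof (rule Max_ge)
  show "finite ((\<lambda>G. card {R. is_orientation G R \<and> \<not> contains_dicopy R VH H}) ` {G. G \<subseteq> all_edges n})"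
    using finite_edges_on[of "{..<n}"] by (simp add: all_edges_eq_edges_on)
qed (use assms in blast)

section \<open>Many bowtie-free orientations\<close>

definition cross :: "nat \<Rightarrow> nat \<Rightarrow> (nat \<times> nat) set" where
  "cross m n = {..<m} \<times> {m..<n}"

definition path012 :: "nat set set" where
  "path012 = {{0, 1}, {1, 2}}"

definition bip_path :: "nat \<Rightarrow> nat \<Rightarrow> nat set set" where
  "bip_path m n = path012 \<union> (\<lambda>(x, y). {x, y}) ` cross m n"

definition bip_path_orientation ::
    "nat \<Rightarrow> nat \<Rightarrow> (nat \<times> nat) set \<Rightarrow> (nat \<times> nat) set \<Rightarrow> (nat \<times> nat) set" where
  "bip_path_orientation m n I S = I \<union> S \<union> (cross m n - S)\<inverse>"

lemma path012_orientation_small: "is_orientation path012 I \<Longrightarrow> I \<subseteq> {..2} \<times> {..2}"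
proof
  fix p assume I: "is_orientation path012 I" and "p \<in> I"
  then obtain u v where "p = (u, v)" "{u, v} \<in> path012" using is_orientation_arc by (metis surj_pair)
  thus "p \<in> {..2} \<times> {..2}" unfolding path012_def by (auto simp: doubleton_eq_iff)
qed

lemma bip_path_orientation_is_orientation:
  assumes m: "3 \<le> m" and I: "is_orientation path012 I" and S: "S \<subseteq> cross m n"
  shows "is_orientation (bip_path m n) (bip_path_orientation m n I S)"
  unfolding bip_path_def bip_path_orientation_def Un_assoc
proof (rule is_orientation_Un[OF I is_orientation_pairs[OF _ S]])
  show "cross m n \<inter> (cross m n)\<inverse> = {}" unfolding cross_def by auto
  have "{x, y} \<notin> path012" if "(x, y) \<in> cross m n" for x y
    using that m unfolding path012_def cross_def by (auto simp: doubleton_eq_iff)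
  thus "path012 \<inter> (\<lambda>(x, y). {x, y}) ` cross m n = {}" by fast
qed

lemma cross_inter_small: "3 \<le> m \<Longrightarrow> cross m n \<inter> {..2} \<times> {..2} = {}"
  unfolding cross_def by auto

lemma bip_path_orientation_inter_small:
  assumes m: "3 \<le> m" and I: "is_orientation path012 I" and S: "S \<subseteq> cross m n"
  shows "bip_path_orientation m n I S \<inter> {..2} \<times> {..2} = I"
proof -
  have "(cross m n)\<inverse> \<inter> {..2} \<times> {..2} = {}" using cross_inter_small[OF m] by blast
  thus ?thesis using cross_inter_small[OF m] path012_orientation_small[OF I] S
    unfolding bip_path_orientation_def by blast
qed

lemma bip_path_orientation_inter_cross:
  assumes m: "3 \<le> m" and I: "is_orientation path012 I" and S: "S \<subseteq> cross m n"
  shows "bip_path_orientation m n I S \<inter> cross m n = S"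
proof -
  have "(cross m n)\<inverse> \<inter> cross m n = {}" unfolding cross_def by auto
  thus ?thesis using cross_inter_small[OF m] path012_orientation_small[OF I] S
    unfolding bip_path_orientation_def by blast
qed

lemma bip_path_orientation_small_arc:
  assumes "3 \<le> m" "is_orientation path012 I" "S \<subseteq> cross m n" "x \<le> 2" "y \<le> 2"
  shows "(x, y) \<in> bip_path_orientation m n I S \<longleftrightarrow> (x, y) \<in> I"
  using bip_path_orientation_inter_small[OF assms(1-3)] assms(4,5) by blast

lemma bip_path_orientation_arc_from_1:
  assumes "3 \<le> m" "is_orientation path012 I" "S \<subseteq> cross m n" "b \<in> {m..<n}"
  shows "(1, b) \<in> bip_path_orientation m n I S \<longleftrightarrow> (1, b) \<in> S"
proof -
  have "(1, b) \<in> cross m n" using assms(1,4) unfolding cross_def by simp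
  thus ?thesis using bip_path_orientation_inter_cross[OF assms(1-3)] by blast
qed

lemma bip_path_orientation_arc_to_1:
  assumes "3 \<le> m" "is_orientation path012 I" "S \<subseteq> cross m n" "b \<in> {m..<n}"
  shows "(b, 1) \<in> bip_path_orientation m n I S \<longleftrightarrow> (1, b) \<notin> S"
proof -
  have "(b, 1) \<notin> I" using path012_orientation_small[OF assms(2)] assms(1,4) by auto
  moreover have "(b, 1) \<notin> S" "(1, b) \<in> cross m n" using assms(1,3,4) unfolding cross_def by auto
  ultimately show ?thesis unfolding bip_path_orientation_def by blast
qed

lemma doubleton_in_bip_path:
  "{x, y} \<in> bip_path m n \<longleftrightarrow> (x, y) \<in> cross m n \<or> (y, x) \<in> cross m n \<or>
     (x = 0 \<and> y = 1) \<or> (x = 1 \<and> y = 0) \<or> (x = 1 \<and> y = 2) \<or> (x = 2 \<and> y = 1)"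
  unfolding bip_path_def path012_def by (auto simp: doubleton_eq_iff)

lemma bip_path_subset_all_edges:
  assumes "3 \<le> m" "m \<le> n" shows "bip_path m n \<subseteq> all_edges n"
proof
  fix e assume e: "e \<in> bip_path m n"
  then obtain x y where xy: "e = {x, y}" unfolding bip_path_def path012_def by auto
  with e have "{x, y} \<in> bip_path m n" by simp
  hence "{x, y} \<in> edges_on {..<n}"
    using assms unfolding doubleton_in_edges_on doubleton_in_bip_path cross_def by auto
  thus "e \<in> all_edges n" using xy by (simp add: all_edges_eq_edges_on)
qed

lemma bip_path_right_right: "3 \<le> m \<Longrightarrow> m \<le> x \<Longrightarrow> m \<le> y \<Longrightarrow> {x, y} \<notin> bip_path m n"
  unfolding doubleton_in_bip_path cross_def by auto

lemma bip_path_left_left: "x < m \<Longrightarrow> y < m \<Longrightarrow> {x, y} \<in> bip_path m n \<Longrightarrow> 1 \<in> {x, y}"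
  unfolding doubleton_in_bip_path cross_def by auto

lemma bip_path_triangle:
  assumes m: "3 \<le> m" and xy: "{x, y} \<in> bip_path m n" and yz: "{y, z} \<in> bip_path m n"
    and xz: "{x, z} \<in> bip_path m n"
  shows "1 \<in> {x, y, z}"
proof -
  have "x < m \<and> y < m \<or> x < m \<and> z < m \<or> y < m \<and> z < m"
    using bip_path_right_right[OF m] xy yz xz by (meson not_le)
  thus ?thesis using bip_path_left_left[OF _ _ xy] bip_path_left_left[OF _ _ yz] bip_path_left_left[OF _ _ xz]
    by blast
qed

lemma bip_path_triangle_at_1:
  assumes m: "3 \<le> m" and y: "{1, y} \<in> bip_path m n" and yz: "{y, z} \<in> bip_path m n"
    and z: "{1, z} \<in> bip_path m n"
  shows "\<exists>p b. p \<in> {0, 2} \<and> b \<in> {m..<n} \<and> {y, z} = {p, b}"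
proof -
  have nbr_1: "v \<in> {0, 2} \<and> v < m \<or> v \<in> {m..<n}" if "{1, v} \<in> bip_path m n" for v
    using that m unfolding doubleton_in_bip_path cross_def by auto
  have "\<not> (y \<in> {0, 2} \<and> z \<in> {0, 2})"
    using yz m unfolding doubleton_in_bip_path cross_def by auto
  moreover have "\<not> (y \<in> {m..<n} \<and> z \<in> {m..<n})" using bip_path_right_right[OF m] yz by auto
  ultimately show ?thesis using nbr_1[OF y] nbr_1[OF z] by (metis insert_commute)
qed

lemma bowtie_in_bip_path:
  assumes m: "3 \<le> m" and inj: "inj_on f bowtie_vertices"
    and edges: "\<And>a b. {a, b} \<in> bowtie \<Longrightarrow> {f a, f b} \<in> bip_path m n"
  obtains p q b c where "f 0 = 1" "{p, q} = {0, 2}" "b \<in> {m..<n}" "c \<in> {m..<n}"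
    "{f 1, f 2} = {p, b}" "{f 3, f 4} = {q, c}"
proof -
  have e: "{f 0, f 1} \<in> bip_path m n" "{f 1, f 2} \<in> bip_path m n" "{f 0, f 2} \<in> bip_path m n"
    "{f 0, f 3} \<in> bip_path m n" "{f 3, f 4} \<in> bip_path m n" "{f 0, f 4} \<in> bip_path m n"
    by (rule edges, simp add: bowtie_def)+
  have "distinct (map f [0, 1, 2, 3, 4])"
    using inj unfolding distinct_map bowtie_vertices_def by simp
  hence "f 1 \<noteq> f 3" "f 1 \<noteq> f 4" "f 2 \<noteq> f 3" "f 2 \<noteq> f 4" by simp_all
  hence disj: "{f 1, f 2} \<inter> {f 3, f 4} = {}" by simp
  have f0: "f 0 = 1"
  proof (rule ccontr)
    assume "f 0 \<noteq> 1"
    hence "1 \<in> {f 1, f 2}" "1 \<in> {f 3, f 4}"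
      using bip_path_triangle[OF m e(1,2,3)] bip_path_triangle[OF m e(4,5,6)] by auto
    thus False using disj by blast
  qed
  obtain p b where pb: "p \<in> {0, 2}" "b \<in> {m..<n}" "{f 1, f 2} = {p, b}"
    using bip_path_triangle_at_1[OF m e(1,2,3)[unfolded f0]] by (elim exE conjE)
  obtain q c where qc: "q \<in> {0, 2}" "c \<in> {m..<n}" "{f 3, f 4} = {q, c}"
    using bip_path_triangle_at_1[OF m e(4,5,6)[unfolded f0]] by (elim exE conjE)
  have "p \<in> {f 1, f 2}" "q \<in> {f 3, f 4}" using pb(3) qc(3) by simp_all
  hence "p \<noteq> q" using disj by blast
  hence "{p, q} = {0, 2}" using pb(1) qc(1) by auto
  from that[OF f0 this pb(2) qc(2) pb(3) qc(3)] show thesis .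
qed

lemma dicopy_in_bip_path:
  assumes m: "3 \<le> m" and R: "is_orientation (bip_path m n) R" and H: "is_orientation bowtie H"
    and copy: "contains_dicopy R bowtie_vertices H"
  obtains f p q b c where "\<forall>(a, b) \<in> H. (f a, f b) \<in> R" "f 0 = 1" "{p, q} = {0, 2}"
    "b \<in> {m..<n}" "c \<in> {m..<n}" "{f 1, f 2} = {p, b}" "{f 3, f 4} = {q, c}"
proof -
  obtain f where inj: "inj_on f bowtie_vertices" and arcs: "\<forall>(a, b) \<in> H. (f a, f b) \<in> R"
    using copy unfolding contains_dicopy_def by blast
  show thesis
  proof (rule bowtie_in_bip_path[OF m inj])
    show "{f a, f b} \<in> bip_path m n" if "{a, b} \<in> bowtie" for a b
      using copy_of_dicopy[OF R H arcs that] .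
  qed (rule that[OF arcs])
qed

lemma dicopy_in_bip_path_orientation:
  assumes m: "3 \<le> m" and I: "is_orientation path012 I" and S: "S \<subseteq> cross m n"
    and H: "is_orientation bowtie H"
    and copy: "contains_dicopy (bip_path_orientation m n I S) bowtie_vertices H"
  obtains p q b c where "{p, q} = {0, 2}" "b \<in> {m..<n}" "c \<in> {m..<n}"
    "(1, 0) \<in> H \<Longrightarrow> (2, 0) \<in> H \<Longrightarrow> (p, 1) \<in> I \<and> (1, b) \<notin> S"
    "(0, 1) \<in> H \<Longrightarrow> (0, 2) \<in> H \<Longrightarrow> (1, p) \<in> I \<and> (1, b) \<in> S"
    "(3, 0) \<in> H \<Longrightarrow> (4, 0) \<in> H \<Longrightarrow> (q, 1) \<in> I \<and> (1, c) \<notin> S"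
    "(0, 3) \<in> H \<Longrightarrow> (0, 4) \<in> H \<Longrightarrow> (1, q) \<in> I \<and> (1, c) \<in> S"
proof -
  let ?R = "bip_path_orientation m n I S"
  obtain f p q b c where arcs: "\<forall>(a, b) \<in> H. (f a, f b) \<in> ?R" and f0: "f 0 = 1"
    and pq: "{p, q} = {0, 2}" and b: "b \<in> {m..<n}" and c: "c \<in> {m..<n}"
    and fpb: "{f 1, f 2} = {p, b}" and fqc: "{f 3, f 4} = {q, c}"
    by (rule dicopy_in_bip_path[OF m bip_path_orientation_is_orientation[OF m I S] H copy])
  have to_centre: "(f i, 1) \<in> ?R" if "(i, 0) \<in> H" for i using arcs f0 that by auto
  have from_centre: "(1, f i) \<in> ?R" if "(0, i) \<in> H" for i using arcs f0 that by auto
  have "p \<le> 2" "q \<le> 2" using pq by (auto simp: doubleton_eq_iff)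
  have pb: "p \<in> {f 1, f 2}" "b \<in> {f 1, f 2}" and qc: "q \<in> {f 3, f 4}" "c \<in> {f 3, f 4}"
    using fpb fqc by auto
  note small = bip_path_orientation_small_arc[OF m I S]
  note from_1 = bip_path_orientation_arc_from_1[OF m I S]
  note to_1 = bip_path_orientation_arc_to_1[OF m I S]
  show thesis
  proof (rule that[OF pq b c])
    assume "(1, 0) \<in> H" "(2, 0) \<in> H"
    hence "(p, 1) \<in> ?R" "(b, 1) \<in> ?R" using to_centre pb by auto
    thus "(p, 1) \<in> I \<and> (1, b) \<notin> S" using small[OF \<open>p \<le> 2\<close>] to_1[OF b] by simp
  next
    assume "(0, 1) \<in> H" "(0, 2) \<in> H"
    hence "(1, p) \<in> ?R" "(1, b) \<in> ?R" using from_centre pb by auto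
    thus "(1, p) \<in> I \<and> (1, b) \<in> S" using small[OF _ \<open>p \<le> 2\<close>] from_1[OF b] by simp
  next
    assume "(3, 0) \<in> H" "(4, 0) \<in> H"
    hence "(q, 1) \<in> ?R" "(c, 1) \<in> ?R" using to_centre qc by auto
    thus "(q, 1) \<in> I \<and> (1, c) \<notin> S" using small[OF \<open>q \<le> 2\<close>] to_1[OF c] by simp
  next
    assume "(0, 3) \<in> H" "(0, 4) \<in> H"
    hence "(1, q) \<in> ?R" "(1, c) \<in> ?R" using from_centre qc by auto
    thus "(1, q) \<in> I \<and> (1, c) \<in> S" using small[OF _ \<open>q \<le> 2\<close>] from_1[OF c] by simp
  qed
qed

lemma dicopy_all_in:
  assumes "3 \<le> m" "is_orientation path012 I" "S \<subseteq> cross m n" "is_orientation bowtie H"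
    and "contains_dicopy (bip_path_orientation m n I S) bowtie_vertices H"
    and "{(1, 0), (2, 0), (3, 0), (4, 0)} \<subseteq> H"
  shows "(0, 1) \<in> I \<and> (2, 1) \<in> I \<and> (\<exists>b\<in>{m..<n}. (1, b) \<notin> S)"
  by (rule dicopy_in_bip_path_orientation[OF assms(1-5)]) (use assms(6) in \<open>auto simp: doubleton_eq_iff\<close>)

lemma dicopy_all_out:
  assumes "3 \<le> m" "is_orientation path012 I" "S \<subseteq> cross m n" "is_orientation bowtie H"
    and "contains_dicopy (bip_path_orientation m n I S) bowtie_vertices H"
    and "{(0, 1), (0, 2), (0, 3), (0, 4)} \<subseteq> H"
  shows "(1, 0) \<in> I \<and> (1, 2) \<in> I \<and> (\<exists>b\<in>{m..<n}. (1, b) \<in> S)"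
  by (rule dicopy_in_bip_path_orientation[OF assms(1-5)]) (use assms(6) in \<open>auto simp: doubleton_eq_iff\<close>)

lemma dicopy_in_out:
  assumes "3 \<le> m" "is_orientation path012 I" "S \<subseteq> cross m n" "is_orientation bowtie H"
    and "contains_dicopy (bip_path_orientation m n I S) bowtie_vertices H"
    and "{(1, 0), (2, 0), (0, 3), (0, 4)} \<subseteq> H \<or> {(0, 1), (0, 2), (3, 0), (4, 0)} \<subseteq> H"
  shows "(\<exists>x. (x, 1) \<in> I) \<and> (\<exists>y. (1, y) \<in> I) \<and> (\<exists>b\<in>{m..<n}. (1, b) \<in> S)"
  by (rule dicopy_in_bip_path_orientation[OF assms(1-5)]) (use assms(6) in auto)

lemma path012_orientations:
  "is_orientation path012 {(1, 0), (1, 2)}" "is_orientation path012 {(0, 1), (2, 1)}"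
  "is_orientation path012 {(0, 1), (1, 2)}"
  unfolding is_orientation_def path012_def by (simp_all add: doubleton_eq_iff)

lemma path012_orientations_distinct:
  "distinct [{(1, 0), (1, 2)}, {(0, 1), (1, 2)}, {(0, 1), (2, 1)} :: (nat \<times> nat) set]"
  "distinct [{(0, 1), (2, 1)}, {(0, 1), (1, 2)}, {(1, 0), (1, 2)} :: (nat \<times> nat) set]"
  "distinct [{(1, 0), (1, 2)}, {(0, 1), (2, 1)}, {(0, 1), (1, 2)} :: (nat \<times> nat) set]"
proof -
  let ?src = "{(1, 0), (1, 2)} :: (nat \<times> nat) set" and ?fwd = "{(0, 1), (1, 2)} :: (nat \<times> nat) set"
    and ?snk = "{(0, 1), (2, 1)} :: (nat \<times> nat) set"
  have "(1, 0) \<in> ?src - ?fwd - ?snk" "(2, 1) \<in> ?snk - ?fwd" by simp_all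
  hence ne: "?src \<noteq> ?fwd" "?src \<noteq> ?snk" "?fwd \<noteq> ?snk" by (metis Diff_iff)+
  show "distinct [?src, ?fwd, ?snk]" "distinct [?snk, ?fwd, ?src]" "distinct [?src, ?snk, ?fwd]"
    using ne ne[THEN not_sym] by (simp_all only: distinct_length_2_or_more distinct_singleton simp_thms)
qed

lemma D_ge_bip_path:
  assumes m: "3 \<le> m" "m \<le> n"
    and I: "is_orientation path012 I1" "is_orientation path012 I2" "is_orientation path012 I3"
    and distinct: "distinct [I1, I2, I3]" and S0: "S0 \<subseteq> cross m n"
    and free12: "\<And>S. S \<subseteq> cross m n \<Longrightarrow> \<not> contains_dicopy (bip_path_orientation m n I1 S) VH H
      \<and> \<not> contains_dicopy (bip_path_orientation m n I2 S) VH H"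
    and free3: "\<not> contains_dicopy (bip_path_orientation m n I3 S0) VH H"
  shows "2 * 2 ^ (m * (n - m)) + 1 \<le> D n VH H"
proof -
  define F where "F I = bip_path_orientation m n I ` Pow (cross m n)" for I
  let ?R3 = "bip_path_orientation m n I3 S0"
  have fin: "finite (cross m n)" unfolding cross_def by simp
  have card_F: "card (F I) = 2 ^ (m * (n - m))" if "is_orientation path012 I" for I
  proof -
    have "inj_on (bip_path_orientation m n I) (Pow (cross m n))"
      using bip_path_orientation_inter_cross[OF m(1) that] unfolding inj_on_def by (metis PowD)
    thus ?thesis unfolding F_def using card_Pow[of "cross m n"] fin
      by (simp add: card_image cross_def card_cartesian_product)
  qed
  have I_of: "R \<inter> {..2} \<times> {..2} = I" if "R \<in> F I" "is_orientation path012 I" for R I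
    using that bip_path_orientation_inter_small[OF m(1) that(2)] unfolding F_def by blast
  have "I1 \<noteq> I2" "I1 \<noteq> I3" "I2 \<noteq> I3" using distinct by auto
  hence "F I1 \<inter> F I2 = {}" "?R3 \<notin> F I1 \<union> F I2"
    using I_of I bip_path_orientation_inter_small[OF m(1) I(3) S0] by blast+
  moreover have "finite (F I1)" "finite (F I2)" unfolding F_def using fin by simp_all
  ultimately have "2 * 2 ^ (m * (n - m)) + 1 = card (insert ?R3 (F I1 \<union> F I2))"
    using card_F I by (simp add: card_Un_disjoint)
  also have "\<dots> \<le> card {R. is_orientation (bip_path m n) R \<and> \<not> contains_dicopy R VH H}"
  proof (rule card_mono)
    show "finite {R. is_orientation (bip_path m n) R \<and> \<not> contains_dicopy R VH H}"
      using finite_orientations[OF bip_path_subset_all_edges[OF m]] by simp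
    show "insert ?R3 (F I1 \<union> F I2) \<subseteq> {R. is_orientation (bip_path m n) R \<and> \<not> contains_dicopy R VH H}"
      using bip_path_orientation_is_orientation[OF m(1)] I S0 free12 free3 unfolding F_def by auto
  qed
  also have "\<dots> \<le> D n VH H"
    by (rule card_free_orientations_le_D[OF bip_path_subset_all_edges[OF m]])
  finally show ?thesis .
qed

lemma D_ge_if_all_in:
  assumes H: "is_orientation bowtie H" and all_in: "{(1, 0), (2, 0), (3, 0), (4, 0)} \<subseteq> H"
    and m: "3 \<le> m" "m \<le> n"
  shows "2 * 2 ^ (m * (n - m)) + 1 \<le> D n bowtie_vertices H"
proof -
  have free: "\<not> contains_dicopy (bip_path_orientation m n I S) bowtie_vertices H"
    if "is_orientation path012 I" "S \<subseteq> cross m n" "(0, 1) \<notin> I \<or> (2, 1) \<notin> I \<or> S = cross m n" for I S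
  proof
    assume "contains_dicopy (bip_path_orientation m n I S) bowtie_vertices H"
    from dicopy_all_in[OF m(1) that(1,2) H this all_in]
    obtain b where "(0, 1) \<in> I" "(2, 1) \<in> I" "b \<in> {m..<n}" "(1, b) \<notin> S" by blast
    moreover from this(3) have "(1, b) \<in> cross m n" using m unfolding cross_def by simp
    ultimately show False using that(3) by blast
  qed
  show ?thesis
    by (rule D_ge_bip_path[OF m path012_orientations(1,3,2) path012_orientations_distinct(1) subset_refl])
      (use free path012_orientations in simp_all)
qed

lemma D_ge_if_all_out:
  assumes H: "is_orientation bowtie H" and all_out: "{(0, 1), (0, 2), (0, 3), (0, 4)} \<subseteq> H"
    and m: "3 \<le> m" "m \<le> n"
  shows "2 * 2 ^ (m * (n - m)) + 1 \<le> D n bowtie_vertices H"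
proof -
  have free: "\<not> contains_dicopy (bip_path_orientation m n I S) bowtie_vertices H"
    if "is_orientation path012 I" "S \<subseteq> cross m n" "(1, 0) \<notin> I \<or> (1, 2) \<notin> I \<or> S = {}" for I S
  proof
    assume "contains_dicopy (bip_path_orientation m n I S) bowtie_vertices H"
    from dicopy_all_out[OF m(1) that(1,2) H this all_out]
    obtain b where "(1, 0) \<in> I" "(1, 2) \<in> I" "(1, b) \<in> S" by blast
    thus False using that(3) by blast
  qed
  show ?thesis
    by (rule D_ge_bip_path[OF m path012_orientations(2,3,1) path012_orientations_distinct(2) empty_subsetI])
      (use free path012_orientations in simp_all)
qed

lemma D_ge_if_in_out:
  assumes H: "is_orientation bowtie H"
    and in_out: "{(1, 0), (2, 0), (0, 3), (0, 4)} \<subseteq> H \<or> {(0, 1), (0, 2), (3, 0), (4, 0)} \<subseteq> H"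
    and m: "3 \<le> m" "m \<le> n"
  shows "2 * 2 ^ (m * (n - m)) + 1 \<le> D n bowtie_vertices H"
proof -
  have free: "\<not> contains_dicopy (bip_path_orientation m n I S) bowtie_vertices H"
    if "is_orientation path012 I" "S \<subseteq> cross m n" "(\<forall>x. (x, 1) \<notin> I) \<or> (\<forall>y. (1, y) \<notin> I) \<or> S = {}"
    for I S
  proof
    assume "contains_dicopy (bip_path_orientation m n I S) bowtie_vertices H"
    from dicopy_in_out[OF m(1) that(1,2) H this in_out]
    obtain x y b where "(x, 1) \<in> I" "(1, y) \<in> I" "(1, b) \<in> S" by blast
    thus False using that(3) by blast
  qed
  show ?thesis
    by (rule D_ge_bip_path[OF m path012_orientations(1,2,3) path012_orientations_distinct(3) empty_subsetI])
      (use free path012_orientations in simp_all)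
qed

lemma ceil_half_times_floor_half: "(n + 1) div 2 * (n - (n + 1) div 2) = n * n div (4::nat)"
proof (cases "even n")
  case True
  then obtain k where "n = 2 * k" by blast
  thus ?thesis by (simp add: algebra_simps)
next
  case False
  then obtain k where k: "n = 2 * k + 1" using oddE by blast
  have "(2 * k + 1) * (2 * k + 1) = 4 * (k * k + k) + 1" by (simp add: algebra_simps)
  hence "n * n div 4 = k * k + k" using k by simp
  moreover have "(n + 1) div 2 = k + 1" using k by simp
  ultimately show ?thesis using k by (simp add: algebra_simps)
qed

theorem mainTheorem6:
  fixes H :: "(nat \<times> nat) set"
  assumes orient: "is_orientation bowtie H"
    and cases:
      "({(1,0), (2,0), (3,0), (4,0)} \<subseteq> H \<or> {(0,1), (0,2), (0,3), (0,4)} \<subseteq> H)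
       \<or> ({(1,0), (2,0), (0,3), (0,4)} \<subseteq> H \<or> {(0,1), (0,2), (3,0), (4,0)} \<subseteq> H)"
  shows "\<exists>N. \<forall>n \<ge> N. D n bowtie_vertices H > 2 ^ ex n bowtie_vertices bowtie"
proof (intro exI allI impI)
  fix n :: nat assume n: "5 \<le> n"
  define m where "m = (n + 1) div 2"
  have m: "3 \<le> m" "m \<le> n" using n unfolding m_def by simp_all
  have "ex n bowtie_vertices bowtie \<le> m * (n - m) + 1"
    using ex_bowtie_le[OF n] ceil_half_times_floor_half[of n] unfolding m_def by simp
  hence "(2::nat) ^ ex n bowtie_vertices bowtie \<le> 2 ^ (m * (n - m) + 1)" by (rule power_increasing) simp
  also have "\<dots> < 2 * 2 ^ (m * (n - m)) + 1" by simp
  also have "\<dots> \<le> D n bowtie_vertices H"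
    using cases D_ge_if_all_in[OF orient _ m] D_ge_if_all_out[OF orient _ m] D_ge_if_in_out[OF orient _ m]
    by blast
  finally show "D n bowtie_vertices H > 2 ^ ex n bowtie_vertices bowtie" .
qed

end
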